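(* Let $\mu$ be an isotropic log-concave probability measure on $\mathbb{R}$ (i.e. with mean $0$ and variance $1$). Then $\Gamma(\mu)\leq 2$. Moreover, the bound is sharp: if $\mu$ is the law of $Y-1$ where $Y$ is exponentially distributed with parameter $1$ (density $e^{-(x+1)}\mathbf{1}_{\{x\geq -1\}}$), then $\mu$ is isotropic log-concave and $\Gamma(\mu)=2$.
   Context: A probability measure on $\mathbb{R}$ is log-concave if it has a density $f$ with $\ln f$ concave. For an interval $I=[a,b]$, $\mu^+(\partial I)=\liminf_{\epsilon\to0^+}\frac{\mu([a-\epsilon,b+\epsilon])-\mu([a,b])}{\epsilon}$, and $\Gamma(\mu)=\sup\{\mu^+(\partial I): I=[a,b]\subset\mathbb{R},\ a<b\}$. *)

theory Defs
  imports "HOL-Probability.Probability"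
begin

definition logconcave_fun :: "(real \<Rightarrow> real) \<Rightarrow> bool" where
  "logconcave_fun f \<longleftrightarrow> (\<forall>x. 0 \<le> f x) \<and>
     (\<forall>x y t. 0 \<le> t \<and> t \<le> 1 \<longrightarrow>
        f x powr (1 - t) * f y powr t \<le> f ((1 - t) * x + t * y))"

definition logconcave_measure :: "real measure \<Rightarrow> bool" where
  "logconcave_measure \<mu> \<longleftrightarrow> prob_space \<mu> \<and>
     (\<exists>f. f \<in> borel_measurable borel \<and> logconcave_fun f \<and>
          \<mu> = density lborel (\<lambda>x. ennreal (f x)))"

definition isotropic :: "real measure \<Rightarrow> bool" where
  "isotropic \<mu> \<longleftrightarrow> integrable \<mu> (\<lambda>x. x\<^sup>2) \<and>
     (\<integral>x. x \<partial>\<mu>) = 0 \<and> (\<integral>x. x\<^sup>2 \<partial>\<mu>) = 1"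

definition boundary_measure :: "real measure \<Rightarrow> real \<Rightarrow> real \<Rightarrow> ereal" where
  "boundary_measure \<mu> a b =
     Liminf (at_right 0)
       (\<lambda>\<epsilon>. ereal ((measure \<mu> {a - \<epsilon>..b + \<epsilon>} - measure \<mu> {a..b}) / \<epsilon>))"

definition Gamma_iso :: "real measure \<Rightarrow> ereal" where
  "Gamma_iso \<mu> = (SUP ab \<in> {(a, b). a < b}. boundary_measure \<mu> (fst ab) (snd ab))"

end

theory Submission
  imports Defs
begin

text \<open>
  Since the boundary measure of an interval is at most twice the supremum of the density, it
  suffices to show that the density \<open>f\<close> of an isotropic log-concave measure satisfies
  \<open>f \<le> 1\<close>. Suppose
  \<open>f x\<^sub>0 > c > 1\<close> and let \<open>g\<close> be a density with \<open>g x\<^sub>0 = c\<close> that is log-affine on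
  either side of \<open>x\<^sub>0\<close>. Log-concavity of \<open>f\<close> makes \<open>{g < f}\<close> an interval around
  \<open>x\<^sub>0\<close>, so \<open>f - g\<close> changes sign at most twice. Integrating \<open>f - g\<close> against a polynomial
  that changes sign at the same points compares the moments of \<open>f\<close> and \<open>g\<close>: against the
  one-sided exponential at \<open>x\<^sub>0\<close> this gives \<open>0 = mean f \<le> x\<^sub>0 + 1/c\<close>, hence (by
  reflection) \<open>\<bar>c x\<^sub>0\<bar> < 1\<close>; this allows a two-sided \<open>g\<close> with the mass and mean of \<open>f\<close>,
  and then \<open>1 = Var f \<le> Var g < 1/c\<^sup>2 < 1\<close>. For sharpness, the shifted exponential
  density is close to \<open>1\<close> just to the right of \<open>-1\<close>.
\<close>

lemma has_bochner_integral_exponential_moment: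
  assumes "0 < l"
  shows "has_bochner_integral lborel (\<lambda>x. exponential_density l x * x ^ k) (fact k / l ^ k)"
proof (rule has_bochner_integral_nn_integral)
  show "(\<integral>\<^sup>+ x. ennreal (exponential_density l x * x ^ k) \<partial>lborel) = ennreal (fact k / l ^ k)"
    using nn_integral_erlang_ith_moment[OF assms, of 0 k] by simp
qed (use assms in \<open>auto simp: exponential_density_def\<close>)

lemma has_bochner_integral_exponential_quadratic:
  assumes l: "0 < l" and s: "\<bar>s\<bar> = 1"
  shows "has_bochner_integral lborel
           (\<lambda>x. exponential_density l (s * (x - a)) * (u + v * x + w * x\<^sup>2))
           (u + v * (a + s / l) + w * (a\<^sup>2 + 2 * s * a / l + 2 / l\<^sup>2))"
proof -
  let ?h = "\<lambda>x. exponential_density l (s * (x - a)) * (u + v * x + w * x\<^sup>2)"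
  have s2: "s * s = 1"
    using s by (metis abs_mult_self_eq mult_1)
  have arg: "s * (a + s * y - a) = y" for y
    by (simp add: mult.assoc[symmetric] s2)
  have sq: "(a + s * y)\<^sup>2 = a\<^sup>2 + 2 * s * a * y + y\<^sup>2" for y
  proof -
    have "(a + s * y)\<^sup>2 = a\<^sup>2 + 2 * s * a * y + (s * s) * y\<^sup>2"
      by (simp add: power2_eq_square algebra_simps)
    then show ?thesis by (simp add: s2)
  qed
  have shift: "?h (a + s * y) = (u + v * a + w * a\<^sup>2) * (exponential_density l y * y ^ 0)
      + (s * (v + 2 * w * a)) * (exponential_density l y * y ^ 1)
      + w * (exponential_density l y * y ^ 2)" for y
    by (simp only: arg sq) (simp add: algebra_simps)
  have "has_bochner_integral lborel (\<lambda>y. ?h (a + s * y))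
      ((u + v * a + w * a\<^sup>2) * (fact 0 / l ^ 0) + (s * (v + 2 * w * a)) * (fact 1 / l ^ 1)
       + w * (fact 2 / l ^ 2))"
    unfolding shift
    by (intro has_bochner_integral_add has_bochner_integral_mult_right
        has_bochner_integral_exponential_moment l)
  also have "\<dots> = u + v * (a + s / l) + w * (a\<^sup>2 + 2 * s * a / l + 2 / l\<^sup>2)"
    by (simp add: fact_numeral algebra_simps add_divide_distrib)
  finally show ?thesis
    using lborel_has_bochner_integral_real_affine_iff[of s ?h _ a] s by auto
qed

lemma logconcave_fun_affine_comp:
  assumes "logconcave_fun f"
  shows "logconcave_fun (\<lambda>x. f (a + s * x))"
  unfolding logconcave_fun_def
proof safe
  fix x y t :: real
  assume "0 \<le> t" "t \<le> 1"
  then have "f (a + s * x) powr (1 - t) * f (a + s * y) powr t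
      \<le> f ((1 - t) * (a + s * x) + t * (a + s * y))"
    using assms unfolding logconcave_fun_def by blast
  also have "(1 - t) * (a + s * x) + t * (a + s * y) = a + s * ((1 - t) * x + t * y)"
    by (simp add: algebra_simps)
  finally show "f (a + s * x) powr (1 - t) * f (a + s * y) powr t \<le> f (a + s * ((1 - t) * x + t * y))" .
qed (use assms in \<open>auto simp: logconcave_fun_def\<close>)

lemma logconcave_fun_exponential_density:
  assumes "0 < l"
  shows "logconcave_fun (exponential_density l)"
  unfolding logconcave_fun_def
proof safe
  fix x y t :: real
  assume t: "0 \<le> t" "t \<le> 1"
  show "exponential_density l x powr (1 - t) * exponential_density l y powr t
      \<le> exponential_density l ((1 - t) * x + t * y)"
  proof (cases "0 \<le> x \<and> 0 \<le> y")
    case True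
    then have "0 \<le> (1 - t) * x + t * y"
      using t by simp
    moreover have "l powr (1 - t) * l powr t = l"
      using assms by (simp add: powr_add[symmetric])
    ultimately show ?thesis
      using True assms
      by (simp add: exponential_density_def powr_mult exp_powr_real exp_add[symmetric] algebra_simps)
  next
    case False
    then show ?thesis
      using assms by (auto simp: exponential_density_def)
  qed
qed (use assms in \<open>auto simp: exponential_density_def\<close>)

section \<open>Comparison with densities that are log-affine away from a point\<close>

text \<open>\<open>t = 0\<close> is excluded because \<open>0 powr 0 = 0\<close>.\<close>
definition ray_logconvex :: "real \<Rightarrow> (real \<Rightarrow> real) \<Rightarrow> bool" where
  "ray_logconvex x\<^sub>0 g \<longleftrightarrow> (\<forall>x. 0 \<le> g x) \<and>
     (\<forall>z t. 0 < t \<and> t \<le> 1 \<longrightarrow> g ((1 - t) * x\<^sub>0 + t * z) \<le> g x\<^sub>0 powr (1 - t) * g z powr t)"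

lemma less_logconcave_closed_segment:
  assumes f: "logconcave_fun f" and g: "ray_logconvex x\<^sub>0 g"
    and x0: "g x\<^sub>0 < f x\<^sub>0" and z: "g z < f z" and x: "x \<in> closed_segment x\<^sub>0 z"
  shows "g x < f x"
proof -
  obtain t where t: "0 \<le> t" "t \<le> 1" and x_eq: "x = (1 - t) * x\<^sub>0 + t * z"
    using x by (auto simp: in_segment)
  show ?thesis
  proof (cases "t = 0")
    case True
    then show ?thesis using x0 x_eq by simp
  next
    case False
    then have t_pos: "0 < t" using t by simp
    have g_nonneg: "0 \<le> g y" for y
      using g by (simp add: ray_logconvex_def)
    have "g x \<le> g x\<^sub>0 powr (1 - t) * g z powr t"
      using g t_pos t unfolding ray_logconvex_def x_eq by blast
    also have "\<dots> \<le> f x\<^sub>0 powr (1 - t) * g z powr t"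
      using x0 t g_nonneg by (intro mult_right_mono powr_mono2) auto
    also have "\<dots> < f x\<^sub>0 powr (1 - t) * f z powr t"
      using x0 z t_pos g_nonneg[of x\<^sub>0] g_nonneg[of z]
      by (intro mult_strict_left_mono powr_less_mono2) auto
    also have "\<dots> \<le> f x"
      using f t unfolding logconcave_fun_def x_eq by blast
    finally show ?thesis .
  qed
qed

lemma is_interval_less_logconcave:
  assumes "logconcave_fun f" "ray_logconvex x\<^sub>0 g" "g x\<^sub>0 < f x\<^sub>0"
  shows "is_interval {x. g x < f x}"
  unfolding is_interval_1
proof safe
  fix y z x
  assume "g y < f y" "g z < f z" "y \<le> x" "x \<le> z"
  then show "g x < f x"
    using less_logconcave_closed_segment[OF assms, of z x] less_logconcave_closed_segment[OF assms, of y x]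
    by (cases "x\<^sub>0 \<le> x") (auto simp: closed_segment_eq_real_ivl)
qed

lemma is_interval_below_union_less_logconcave:
  assumes f: "logconcave_fun f" and g: "ray_logconvex x\<^sub>0 g" and x0: "g x\<^sub>0 < f x\<^sub>0"
  shows "is_interval ({x. x < x\<^sub>0} \<union> {x. g x < f x})"
  unfolding is_interval_1
proof (intro ballI allI impI)
  fix y z x
  assume "y \<in> {x. x < x\<^sub>0} \<union> {x. g x < f x}" "z \<in> {x. x < x\<^sub>0} \<union> {x. g x < f x}"
    and "y \<le> x \<and> x \<le> z"
  show "x \<in> {x. x < x\<^sub>0} \<union> {x. g x < f x}"
  proof (cases "x < x\<^sub>0")
    case False
    then have "g z < f z" "x \<in> closed_segment x\<^sub>0 z"
      using \<open>z \<in> _\<close> \<open>y \<le> x \<and> x \<le> z\<close> by (auto simp: closed_segment_eq_real_ivl)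
    then show ?thesis
      using less_logconcave_closed_segment[OF f g x0] by simp
  qed simp
qed

lemma exp_mult_eq_powr_interpolation:
  fixes c t u :: real
  assumes "0 < c"
  shows "c * exp (t * u) = c powr (1 - t) * (c * exp u) powr t"
proof -
  have "ln (c * exp u) = ln c + u"
    using assms by (simp add: ln_mult_pos)
  then have "c powr (1 - t) * (c * exp u) powr t = exp ((1 - t) * ln c + t * (ln c + u))"
    using assms by (simp add: powr_def exp_add)
  also have "\<dots> = c * exp (t * u)"
    using assms by (simp add: algebra_simps exp_add)
  finally show ?thesis ..
qed

lemma ray_logconvex_exponential_density:
  assumes c: "0 < c"
  shows "ray_logconvex x\<^sub>0 (\<lambda>x. exponential_density c (x - x\<^sub>0))"
  unfolding ray_logconvex_def
proof (intro conjI allI impI)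
  fix z t :: real
  assume t: "0 < t \<and> t \<le> 1"
  have between: "(1 - t) * x\<^sub>0 + t * z - x\<^sub>0 = t * (z - x\<^sub>0)"
    by (simp add: algebra_simps)
  have at_x0: "exponential_density c (x\<^sub>0 - x\<^sub>0) = c"
    by (simp add: exponential_density_def)
  show "exponential_density c ((1 - t) * x\<^sub>0 + t * z - x\<^sub>0)
      \<le> exponential_density c (x\<^sub>0 - x\<^sub>0) powr (1 - t) * exponential_density c (z - x\<^sub>0) powr t"
  proof (cases "x\<^sub>0 \<le> z")
    case True
    then have "0 \<le> t * (z - x\<^sub>0)"
      using t by simp
    then have "exponential_density c (t * (z - x\<^sub>0)) = c * exp (t * (- (z - x\<^sub>0) * c))"
      by (auto simp: exponential_density_def algebra_simps)
    also have "\<dots> = c powr (1 - t) * (c * exp (- (z - x\<^sub>0) * c)) powr t"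
      by (rule exp_mult_eq_powr_interpolation[OF c])
    also have "c * exp (- (z - x\<^sub>0) * c) = exponential_density c (z - x\<^sub>0)"
      using True by (simp add: exponential_density_def)
    finally show ?thesis
      unfolding between at_x0 by simp
  next
    case False
    then show ?thesis
      using t unfolding between by (simp add: exponential_density_def mult_pos_neg)
  qed
qed (use c in \<open>simp add: exponential_density_def\<close>)

definition two_sided_exponential :: "real \<Rightarrow> real \<Rightarrow> real \<Rightarrow> real \<Rightarrow> real \<Rightarrow> real" where
  "two_sided_exponential x\<^sub>0 c p q x =
     (if x\<^sub>0 \<le> x then p * exponential_density (c / p) (x - x\<^sub>0)
      else q * exponential_density (c / q) (x\<^sub>0 - x))"

lemma two_sided_exponential_eq:
  assumes "0 < p" "0 < q"
  shows "two_sided_exponential x\<^sub>0 c p q x =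
    c * exp (- c * (if x\<^sub>0 \<le> x then (x - x\<^sub>0) / p else (x\<^sub>0 - x) / q))"
  using assms
  by (simp add: two_sided_exponential_def exponential_density_def mult.commute)
    (simp add: minus_divide_left algebra_simps)

lemma ray_logconvex_two_sided_exponential:
  assumes c: "0 < c" and p: "0 < p" and q: "0 < q"
  shows "ray_logconvex x\<^sub>0 (two_sided_exponential x\<^sub>0 c p q)"
proof -
  define \<psi> where "\<psi> y = (if x\<^sub>0 \<le> y then (y - x\<^sub>0) / p else (x\<^sub>0 - y) / q)" for y
  have g: "two_sided_exponential x\<^sub>0 c p q y = c * exp (- c * \<psi> y)" for y
    unfolding \<psi>_def using two_sided_exponential_eq[OF p q] .
  have homogeneous: "\<psi> ((1 - t) * x\<^sub>0 + t * z) = t * \<psi> z" if "0 < t" for t z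
  proof -
    have between: "(1 - t) * x\<^sub>0 + t * z = x\<^sub>0 + t * (z - x\<^sub>0)"
      by (simp add: algebra_simps)
    have "x\<^sub>0 \<le> x\<^sub>0 + t * (z - x\<^sub>0) \<longleftrightarrow> x\<^sub>0 \<le> z"
      using that by (simp add: zero_le_mult_iff)
    then show ?thesis
      unfolding \<psi>_def between by (simp add: algebra_simps)
  qed
  show ?thesis
    unfolding ray_logconvex_def
  proof (intro conjI allI impI)
    fix z t :: real
    assume t: "0 < t \<and> t \<le> 1"
    have "two_sided_exponential x\<^sub>0 c p q ((1 - t) * x\<^sub>0 + t * z) = c * exp (- c * (t * \<psi> z))"
      using t by (simp only: g homogeneous)
    also have "\<dots> = c * exp (t * (- c * \<psi> z))"
      by (simp add: mult_ac)
    also have "\<dots> = c powr (1 - t) * two_sided_exponential x\<^sub>0 c p q z powr t"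
      unfolding g by (rule exp_mult_eq_powr_interpolation[OF c])
    moreover have "two_sided_exponential x\<^sub>0 c p q x\<^sub>0 = c"
      by (simp add: g \<psi>_def)
    ultimately show "two_sided_exponential x\<^sub>0 c p q ((1 - t) * x\<^sub>0 + t * z)
      \<le> two_sided_exponential x\<^sub>0 c p q x\<^sub>0 powr (1 - t) * two_sided_exponential x\<^sub>0 c p q z powr t"
      by simp
  qed (use c in \<open>simp add: g\<close>)
qed

lemma has_bochner_integral_two_sided_exponential:
  assumes c: "0 < c" and p: "0 < p" and q: "0 < q"
  shows "has_bochner_integral lborel
    (\<lambda>x. two_sided_exponential x\<^sub>0 c p q x * (u + v * x + w * x\<^sup>2))
    (p * (u + v * (x\<^sub>0 + p / c) + w * (x\<^sub>0\<^sup>2 + 2 * x\<^sub>0 * p / c + 2 * p\<^sup>2 / c\<^sup>2)) +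
     q * (u + v * (x\<^sub>0 - q / c) + w * (x\<^sub>0\<^sup>2 - 2 * x\<^sub>0 * q / c + 2 * q\<^sup>2 / c\<^sup>2)))"
    (is "has_bochner_integral lborel (\<lambda>x. ?g x * ?poly x) ?I")
proof -
  let ?right = "\<lambda>x. exponential_density (c / p) (1 * (x - x\<^sub>0))"
  let ?left = "\<lambda>x. exponential_density (c / q) (- 1 * (x - x\<^sub>0))"
  have "has_bochner_integral lborel (\<lambda>x. p * (?right x * ?poly x) + q * (?left x * ?poly x))
    (p * (u + v * (x\<^sub>0 + 1 / (c / p)) + w * (x\<^sub>0\<^sup>2 + 2 * 1 * x\<^sub>0 / (c / p) + 2 / (c / p)\<^sup>2)) +
     q * (u + v * (x\<^sub>0 + - 1 / (c / q)) + w * (x\<^sub>0\<^sup>2 + 2 * - 1 * x\<^sub>0 / (c / q) + 2 / (c / q)\<^sup>2)))"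
    using c p q
    by (intro has_bochner_integral_add has_bochner_integral_mult_right
        has_bochner_integral_exponential_quadratic) auto
  also have "\<dots> = ?I"
    using c p q by (simp add: field_simps power2_eq_square)
  finally have sum: "has_bochner_integral lborel (\<lambda>x. p * (?right x * ?poly x) + q * (?left x * ?poly x)) ?I" .
  have off_x0: "p * ?right x + q * ?left x = ?g x" if "x \<noteq> x\<^sub>0" for x
    using that by (auto simp: two_sided_exponential_def exponential_density_def)
  have ae: "AE x in lborel. p * (?right x * ?poly x) + q * (?left x * ?poly x) = ?g x * ?poly x"
    using AE_lborel_singleton[of x\<^sub>0]
    by eventually_elim (metis off_x0 distrib_right mult.assoc)
  have sum_measurable: "(\<lambda>x. p * (?right x * ?poly x) + q * (?left x * ?poly x)) \<in> borel_measurable borel"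
    by measurable
  have measurable: "(\<lambda>x. ?g x * ?poly x) \<in> borel_measurable borel"
    unfolding two_sided_exponential_def by measurable
  have "has_bochner_integral lborel (\<lambda>x. p * (?right x * ?poly x) + q * (?left x * ?poly x)) ?I
      \<longleftrightarrow> has_bochner_integral lborel (\<lambda>x. ?g x * ?poly x) ?I"
    by (rule has_bochner_integral_cong_AE) (use sum_measurable measurable ae in simp_all)
  with sum show ?thesis
    by blast
qed

lemma two_sided_exponential_moment_values:
  fixes c p q x\<^sub>0 :: real
  assumes c: "0 < c" and pq: "p + q = 1" "c * x\<^sub>0 = q - p"
  shows "p * (x\<^sub>0 + p / c) + q * (x\<^sub>0 - q / c) = 0"
    and "p * (x\<^sub>0\<^sup>2 + 2 * x\<^sub>0 * p / c + 2 * p\<^sup>2 / c\<^sup>2) + q * (x\<^sub>0\<^sup>2 - 2 * x\<^sub>0 * q / c + 2 * q\<^sup>2 / c\<^sup>2)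
      = (1 - 2 * p * q) / c\<^sup>2"
proof -
  have x0: "x\<^sub>0 = (q - p) / c" and q: "q = 1 - p"
    using c pq by (auto simp: field_simps)
  show "p * (x\<^sub>0 + p / c) + q * (x\<^sub>0 - q / c) = 0"
    unfolding x0 using c by (simp add: field_simps)
  show "p * (x\<^sub>0\<^sup>2 + 2 * x\<^sub>0 * p / c + 2 * p\<^sup>2 / c\<^sup>2) + q * (x\<^sub>0\<^sup>2 - 2 * x\<^sub>0 * q / c + 2 * q\<^sup>2 / c\<^sup>2)
      = (1 - 2 * p * q) / c\<^sup>2"
    unfolding x0 q using c by (simp add: field_simps power2_eq_square)
qed

section \<open>Integrals of a function changing sign at the ends of an interval\<close>

lemma not_mem_interval_real:
  fixes S :: "real set"
  assumes "is_interval S" "x \<notin> S"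
  shows "(\<forall>y\<in>S. x < y) \<or> (\<forall>y\<in>S. y < x)"
  using assms unfolding is_interval_1 by (meson not_le)

lemma interval_unbounded_below_not_mem:
  fixes S :: "real set"
  assumes "is_interval S" "\<not> bdd_below S" "x \<notin> S" "y \<in> S"
  shows "y < x"
  using not_mem_interval_real[OF assms(1,3)] assms(2,4) by (meson bdd_belowI less_imp_le)

lemma interval_unbounded_above_not_mem:
  fixes S :: "real set"
  assumes "is_interval S" "\<not> bdd_above S" "x \<notin> S" "y \<in> S"
  shows "x < y"
  using not_mem_interval_real[OF assms(1,3)] assms(2,4) by (meson bdd_aboveI less_imp_le)

lemma interval_unbounded_mem:
  fixes S :: "real set"
  assumes "is_interval S" "\<not> bdd_below S" "\<not> bdd_above S"
  shows "x \<in> S"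
proof (rule ccontr)
  assume "x \<notin> S"
  obtain y where "y \<in> S"
    using assms(2) by fastforce
  then show False
    using interval_unbounded_below_not_mem[OF assms(1,2) \<open>x \<notin> S\<close>]
      interval_unbounded_above_not_mem[OF assms(1,3) \<open>x \<notin> S\<close>] by fastforce
qed

lemma has_bochner_integral_nonneg:
  fixes f :: "'a \<Rightarrow> real"
  assumes "has_bochner_integral M f I" "\<And>x. 0 \<le> f x"
  shows "0 \<le> I"
  using Bochner_Integration.integral_nonneg[of M f] assms(2) has_bochner_integral_integral_eq[OF assms(1)] by simp

lemma has_bochner_integral_eq_0_of_weighted_eq_0:
  fixes w D k :: "real \<Rightarrow> real"
  assumes wD: "has_bochner_integral lborel (\<lambda>x. w x * D x) 0" and nonneg: "\<And>x. 0 \<le> w x * D x"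
    and w: "AE x in lborel. w x \<noteq> 0" and kD: "has_bochner_integral lborel (\<lambda>x. k x * D x) I"
  shows "I = 0"
proof -
  have "integral\<^sup>L lborel (\<lambda>x. w x * D x) = 0 \<longleftrightarrow> (AE x in lborel. w x * D x = 0)"
    using wD nonneg by (intro integral_nonneg_eq_0_iff_AE) (auto simp: has_bochner_integral_iff)
  then have "AE x in lborel. w x * D x = 0"
    using wD by (simp add: has_bochner_integral_iff)
  then have "AE x in lborel. k x * D x = 0"
    using w by eventually_elim simp
  then show ?thesis
    using has_bochner_integral_eq_AE[OF kD has_bochner_integral_zero] by simp
qed

lemma has_bochner_integral_quadratic_weight:
  fixes D :: "real \<Rightarrow> real"
  assumes "has_bochner_integral lborel D 0" "has_bochner_integral lborel (\<lambda>x. D x * x) 0"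
    and "has_bochner_integral lborel (\<lambda>x. D x * x\<^sup>2) I"
  shows "has_bochner_integral lborel (\<lambda>x. (a * x\<^sup>2 + b * x + c) * D x) (a * I)"
proof -
  have "has_bochner_integral lborel (\<lambda>x. a * (D x * x\<^sup>2) + b * (D x * x) + c * D x)
      (a * I + b * 0 + c * 0)"
    by (intro has_bochner_integral_add has_bochner_integral_mult_right assms)
  then show ?thesis
    by (simp add: algebra_simps)
qed

context
  fixes S :: "real set" and D :: "real \<Rightarrow> real"
  assumes interval: "is_interval S"
    and nonneg_on: "\<And>x. x \<in> S \<Longrightarrow> 0 \<le> D x"
    and nonpos_off: "\<And>x. x \<notin> S \<Longrightarrow> D x \<le> 0"
begin

lemma sign_change_weight_bounded:
  assumes "S \<noteq> {}" "bdd_below S" "bdd_above S"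
  shows "0 \<le> ((x - Inf S) * (Sup S - x)) * D x"
proof (cases "x \<in> S")
  case True
  then have "Inf S \<le> x" "x \<le> Sup S"
    using assms by (auto intro: cInf_lower cSup_upper)
  then show ?thesis
    using nonneg_on[OF True] by simp
next
  case False
  then have "x \<le> Inf S \<or> Sup S \<le> x"
    using not_mem_interval_real[OF interval False] \<open>S \<noteq> {}\<close>
    by (meson cInf_greatest cSup_least less_imp_le)
  moreover have "Inf S \<le> Sup S"
    using assms by (simp add: cInf_le_cSup)
  ultimately have "(x - Inf S) * (Sup S - x) \<le> 0"
    by (auto simp: mult_nonpos_nonneg mult_nonneg_nonpos)
  then show ?thesis
    using nonpos_off[OF False] by (simp add: mult_nonpos_nonpos)
qed

lemma sign_change_weight_unbounded_above:
  assumes "bdd_below S" "\<not> bdd_above S"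
  shows "0 \<le> (x - Inf S) * D x"
proof (cases "x \<in> S")
  case True
  then show ?thesis
    using assms(1) nonneg_on by (simp add: cInf_lower)
next
  case False
  have "S \<noteq> {}"
    using assms(2) by auto
  then have "x \<le> Inf S"
    using interval_unbounded_above_not_mem[OF interval assms(2) False]
    by (meson cInf_greatest less_imp_le)
  then show ?thesis
    using nonpos_off[OF False] by (simp add: mult_nonpos_nonpos)
qed

lemma sign_change_weight_unbounded_below:
  assumes "\<not> bdd_below S" "bdd_above S"
  shows "0 \<le> (Sup S - x) * D x"
proof (cases "x \<in> S")
  case True
  then show ?thesis
    using assms(2) nonneg_on by (simp add: cSup_upper)
next
  case False
  have "S \<noteq> {}"
    using assms(1) by auto
  then have "Sup S \<le> x"
    using interval_unbounded_below_not_mem[OF interval assms(1) False]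
    by (meson cSup_least less_imp_le)
  then show ?thesis
    using nonpos_off[OF False] by (simp add: mult_nonpos_nonpos)
qed

lemma sign_change_first_moment_nonpos:
  assumes unbounded: "\<not> bdd_below S" and mass_zero: "has_bochner_integral lborel D 0"
    and moment: "has_bochner_integral lborel (\<lambda>x. D x * x) I"
  shows "I \<le> 0"
proof (cases "bdd_above S")
  case True
  have "has_bochner_integral lborel (\<lambda>x. Sup S * D x - D x * x) (Sup S * 0 - I)"
    by (intro has_bochner_integral_diff has_bochner_integral_mult_right mass_zero moment)
  then have "has_bochner_integral lborel (\<lambda>x. (Sup S - x) * D x) (- I)"
    by (simp add: algebra_simps)
  then have "0 \<le> - I"
    by (rule has_bochner_integral_nonneg) (rule sign_change_weight_unbounded_below[OF unbounded True])
  then show ?thesis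
    by simp
next
  case False
  have "has_bochner_integral lborel (\<lambda>x. 1 * D x) 0"
    using mass_zero by simp
  moreover have "0 \<le> 1 * D x" for x
    using nonneg_on interval_unbounded_mem[OF interval unbounded False] by simp
  moreover have "has_bochner_integral lborel (\<lambda>x. x * D x) I"
    using moment by (simp add: mult.commute)
  ultimately show ?thesis
    using has_bochner_integral_eq_0_of_weighted_eq_0[of "\<lambda>_. 1" D "\<lambda>x. x" I] by simp
qed

lemma sign_change_second_moment_nonpos:
  assumes "S \<noteq> {}" and mass_zero: "has_bochner_integral lborel D 0"
    and mean_zero: "has_bochner_integral lborel (\<lambda>x. D x * x) 0"
    and moment: "has_bochner_integral lborel (\<lambda>x. D x * x\<^sup>2) I"
  shows "I \<le> 0"
proof -
  note weight = has_bochner_integral_quadratic_weight[OF mass_zero mean_zero moment]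
  have moment': "has_bochner_integral lborel (\<lambda>x. x\<^sup>2 * D x) I"
    using moment by (simp add: mult.commute)
  consider "bdd_below S" "bdd_above S" | "bdd_below S" "\<not> bdd_above S"
    | "\<not> bdd_below S" "bdd_above S" | "\<not> bdd_below S" "\<not> bdd_above S"
    by (cases "bdd_below S"; cases "bdd_above S") auto
  then show ?thesis
  proof cases
    case 1
    have "has_bochner_integral lborel (\<lambda>x. ((x - Inf S) * (Sup S - x)) * D x) (- I)"
      using weight[of "- 1" "Inf S + Sup S" "- Inf S * Sup S"] by (simp add: algebra_simps power2_eq_square)
    then have "0 \<le> - I"
      by (rule has_bochner_integral_nonneg) (rule sign_change_weight_bounded[OF \<open>S \<noteq> {}\<close> 1])
    then show ?thesis
      by simp
  next
    case 2
    have "has_bochner_integral lborel (\<lambda>x. (x - Inf S) * D x) 0"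
      using weight[of 0 1 "- Inf S"] by simp
    moreover have "0 \<le> (x - Inf S) * D x" for x
      by (rule sign_change_weight_unbounded_above[OF 2])
    moreover have "AE x in lborel. x - Inf S \<noteq> 0"
      using AE_lborel_singleton[of "Inf S"] by eventually_elim simp
    ultimately show ?thesis
      using has_bochner_integral_eq_0_of_weighted_eq_0[OF _ _ _ moment'] by fastforce
  next
    case 3
    have "has_bochner_integral lborel (\<lambda>x. (Sup S - x) * D x) 0"
      using weight[of 0 "- 1" "Sup S"] by simp
    moreover have "0 \<le> (Sup S - x) * D x" for x
      by (rule sign_change_weight_unbounded_below[OF 3])
    moreover have "AE x in lborel. Sup S - x \<noteq> 0"
      using AE_lborel_singleton[of "Sup S"] by eventually_elim simp
    ultimately show ?thesis
      using has_bochner_integral_eq_0_of_weighted_eq_0[OF _ _ _ moment'] by fastforce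
  next
    case 4
    have "has_bochner_integral lborel (\<lambda>x. 1 * D x) 0"
      using mass_zero by simp
    moreover have "0 \<le> 1 * D x" for x
      using nonneg_on interval_unbounded_mem[OF interval 4] by simp
    ultimately show ?thesis
      using has_bochner_integral_eq_0_of_weighted_eq_0[of "\<lambda>_. 1" D "\<lambda>x. x\<^sup>2" I] moment'
      by simp
  qed
qed

end

section \<open>The density of an isotropic log-concave measure is at most 1\<close>

lemma logconcave_mean_le_if_density_gt:
  fixes f :: "real \<Rightarrow> real"
  assumes f: "logconcave_fun f" and mass: "has_bochner_integral lborel f 1"
    and mean: "has_bochner_integral lborel (\<lambda>x. f x * x) m"
    and c: "0 < c" "c < f x\<^sub>0"
  shows "m \<le> x\<^sub>0 + 1 / c"
proof -
  define g where "g x = exponential_density c (x - x\<^sub>0)" for x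
  have g_moments: "has_bochner_integral lborel (\<lambda>x. g x * (u + v * x + w * x\<^sup>2))
      (u + v * (x\<^sub>0 + 1 / c) + w * (x\<^sub>0\<^sup>2 + 2 * x\<^sub>0 / c + 2 / c\<^sup>2))" for u v w
    using has_bochner_integral_exponential_quadratic[OF c(1), of 1 x\<^sub>0 u v w] by (simp add: g_def)
  have g_ray: "ray_logconvex x\<^sub>0 g"
    unfolding g_def by (rule ray_logconvex_exponential_density[OF c(1)])
  have g_x0: "g x\<^sub>0 < f x\<^sub>0"
    using c by (simp add: g_def exponential_density_def)
  define S where "S = {x. x < x\<^sub>0} \<union> {x. g x < f x}"
  have interval: "is_interval S"
    unfolding S_def by (rule is_interval_below_union_less_logconcave[OF f g_ray g_x0])
  have nonneg: "0 \<le> f x - g x" if "x \<in> S" for x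
  proof -
    have "0 \<le> f x"
      using f by (simp add: logconcave_fun_def)
    then show ?thesis
      using that by (auto simp: S_def g_def exponential_density_def)
  qed
  have nonpos: "f x - g x \<le> 0" if "x \<notin> S" for x
    using that by (simp add: S_def)
  have unbounded: "\<not> bdd_below S"
  proof
    assume "bdd_below S"
    then obtain M where M: "\<forall>x\<in>S. M \<le> x"
      unfolding bdd_below_def by blast
    have "min M x\<^sub>0 - 1 < x\<^sub>0"
      using min.cobounded2[of M x\<^sub>0] by linarith
    then have "M \<le> min M x\<^sub>0 - 1"
      using M unfolding S_def by blast
    then show False
      using min.cobounded1[of M x\<^sub>0] by linarith
  qed
  have "has_bochner_integral lborel (\<lambda>x. f x - g x) 0"
    using has_bochner_integral_diff[OF mass g_moments[of 1 0 0]] by simp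
  moreover have "has_bochner_integral lborel (\<lambda>x. (f x - g x) * x) (m - (x\<^sub>0 + 1 / c))"
    using has_bochner_integral_diff[OF mean g_moments[of 0 1 0]] by (simp add: left_diff_distrib)
  ultimately have "m - (x\<^sub>0 + 1 / c) \<le> 0"
    using sign_change_first_moment_nonpos[of S "\<lambda>x. f x - g x"] interval nonneg nonpos unbounded
    by fastforce
  then show ?thesis
    by simp
qed

lemma logconcave_second_moment_lt_if_density_gt:
  fixes f :: "real \<Rightarrow> real"
  assumes f: "logconcave_fun f" and mass: "has_bochner_integral lborel f 1"
    and mean: "has_bochner_integral lborel (\<lambda>x. f x * x) 0"
    and second: "has_bochner_integral lborel (\<lambda>x. f x * x\<^sup>2) V"
    and c: "0 < c" "c < f x\<^sub>0" and centred: "\<bar>c * x\<^sub>0\<bar> < 1"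
  shows "V < 1 / c\<^sup>2"
proof -
  define p q where "p = (1 - c * x\<^sub>0) / 2" and "q = (1 + c * x\<^sub>0) / 2"
  have p: "0 < p" and q: "0 < q"
    using centred by (auto simp: p_def q_def)
  have pq: "p + q = 1" "c * x\<^sub>0 = q - p"
    by (simp_all add: p_def q_def field_simps)
  define g where "g = two_sided_exponential x\<^sub>0 c p q"
  have g_moments: "has_bochner_integral lborel (\<lambda>x. g x * (u + v * x + w * x\<^sup>2))
    (p * (u + v * (x\<^sub>0 + p / c) + w * (x\<^sub>0\<^sup>2 + 2 * x\<^sub>0 * p / c + 2 * p\<^sup>2 / c\<^sup>2)) +
     q * (u + v * (x\<^sub>0 - q / c) + w * (x\<^sub>0\<^sup>2 - 2 * x\<^sub>0 * q / c + 2 * q\<^sup>2 / c\<^sup>2)))" for u v w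
    unfolding g_def by (rule has_bochner_integral_two_sided_exponential[OF c(1) p q])
  have g_mass: "has_bochner_integral lborel g 1"
    using g_moments[of 1 0 0] pq(1) by simp
  have g_mean: "has_bochner_integral lborel (\<lambda>x. g x * x) 0"
    using g_moments[of 0 1 0] two_sided_exponential_moment_values(1)[OF c(1) pq] by simp
  have g_second: "has_bochner_integral lborel (\<lambda>x. g x * x\<^sup>2) ((1 - 2 * p * q) / c\<^sup>2)"
    using g_moments[of 0 0 1] two_sided_exponential_moment_values(2)[OF c(1) pq] by simp
  have g_x0: "g x\<^sub>0 < f x\<^sub>0"
    using c p by (simp add: g_def two_sided_exponential_def exponential_density_def)
  have g_ray: "ray_logconvex x\<^sub>0 g"
    unfolding g_def by (rule ray_logconvex_two_sided_exponential[OF c(1) p q])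
  have "is_interval {x. g x < f x}"
    by (rule is_interval_less_logconcave[OF f g_ray g_x0])
  moreover have "has_bochner_integral lborel (\<lambda>x. f x - g x) 0"
    using has_bochner_integral_diff[OF mass g_mass] by simp
  moreover have "has_bochner_integral lborel (\<lambda>x. (f x - g x) * x) 0"
    using has_bochner_integral_diff[OF mean g_mean] by (simp add: left_diff_distrib)
  moreover have "has_bochner_integral lborel (\<lambda>x. (f x - g x) * x\<^sup>2) (V - (1 - 2 * p * q) / c\<^sup>2)"
    using has_bochner_integral_diff[OF second g_second] by (simp add: left_diff_distrib)
  ultimately have "V - (1 - 2 * p * q) / c\<^sup>2 \<le> 0"
    using sign_change_second_moment_nonpos[of "{x. g x < f x}" "\<lambda>x. f x - g x"] g_x0 by fastforce
  moreover have "(1 - 2 * p * q) / c\<^sup>2 < 1 / c\<^sup>2"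
    using p q c by (simp add: divide_strict_right_mono)
  ultimately show ?thesis
    by simp
qed

lemma has_bochner_integral_reflect:
  fixes h :: "real \<Rightarrow> real"
  shows "has_bochner_integral lborel h I \<Longrightarrow> has_bochner_integral lborel (\<lambda>x. h (- x)) I"
  using lborel_has_bochner_integral_real_affine_iff[of "- 1" h I 0] by simp

lemma logconcave_isotropic_density_le_1:
  fixes f :: "real \<Rightarrow> real"
  assumes f: "logconcave_fun f" and mass: "has_bochner_integral lborel f 1"
    and mean: "has_bochner_integral lborel (\<lambda>x. f x * x) 0"
    and second: "has_bochner_integral lborel (\<lambda>x. f x * x\<^sup>2) 1"
  shows "f x\<^sub>0 \<le> 1"
proof (rule ccontr)
  assume "\<not> f x\<^sub>0 \<le> 1"
  \<comment> \<open>The mean bound for \<open>c'\<close> gives the strict inequality \<open>\<bar>c x\<^sub>0\<bar> < 1\<close> for \<open>c\<close>.\<close>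
  define c c' where "c = (2 + f x\<^sub>0) / 3" and "c' = (1 + 2 * f x\<^sub>0) / 3"
  have c: "1 < c" "c < c'" "c' < f x\<^sub>0"
    using \<open>\<not> f x\<^sub>0 \<le> 1\<close> by (auto simp: c_def c'_def)
  have "0 \<le> x\<^sub>0 + 1 / c'"
    using logconcave_mean_le_if_density_gt[OF f mass mean, of c' x\<^sub>0] c by simp
  moreover have "0 \<le> - x\<^sub>0 + 1 / c'"
  proof -
    have reflected: "logconcave_fun (\<lambda>x. f (- x))"
      using logconcave_fun_affine_comp[OF f, of 0 "- 1"] by simp
    have reflected_mean: "has_bochner_integral lborel (\<lambda>x. f (- x) * x) 0"
      using has_bochner_integral_minus[OF has_bochner_integral_reflect[OF mean]] by simp
    show ?thesis
      using logconcave_mean_le_if_density_gt[OF reflected has_bochner_integral_reflect[OF mass] reflected_mean,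
          of c' "- x\<^sub>0"] c
      by simp
  qed
  ultimately have "\<bar>x\<^sub>0\<bar> \<le> 1 / c'"
    by (simp add: abs_le_iff)
  also have "\<dots> < 1 / c"
    using c by (intro divide_strict_left_mono) auto
  finally have "c * \<bar>x\<^sub>0\<bar> < 1"
    using c by (simp add: field_simps)
  then have "1 < 1 / c\<^sup>2"
    using logconcave_second_moment_lt_if_density_gt[OF f mass mean second, of c x\<^sub>0] c by (simp add: abs_mult)
  moreover have "1 < c\<^sup>2"
    using c by (intro one_less_power) auto
  then have "1 / c\<^sup>2 < 1"
    by (subst divide_less_eq_1_pos) auto
  ultimately show False
    by linarith
qed

section \<open>Boundary measure of intervals\<close>

lemma emeasure_lborel_Icc_diff_Icc:
  fixes a b e :: real
  assumes "a \<le> b" "0 \<le> e"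
  shows "emeasure lborel ({a - e..b + e} - {a..b}) = ennreal (2 * e)"
proof -
  have "emeasure lborel ({a - e..b + e} - {a..b}) = emeasure lborel {a - e..b + e} - emeasure lborel {a..b}"
    using assms by (intro emeasure_Diff) auto
  also have "\<dots> = ennreal ((b - a) + 2 * e) - ennreal (b - a)"
    using assms by (simp add: algebra_simps mult_2)
  also have "\<dots> = ennreal (2 * e)"
    using assms by (simp add: ennreal_minus)
  finally show ?thesis .
qed

lemma emeasure_density_ge_const:
  fixes f :: "real \<Rightarrow> real"
  assumes f: "f \<in> borel_measurable borel" and A: "A \<in> sets borel"
    and lo: "\<And>x. x \<in> A \<Longrightarrow> lo \<le> f x"
  shows "ennreal lo * emeasure lborel A \<le> emeasure (density lborel f) A"
proof -
  have "ennreal lo * emeasure lborel A = (\<integral>\<^sup>+x. ennreal lo * indicator A x \<partial>lborel)"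
    using A by (simp add: nn_integral_cmult_indicator)
  also have "\<dots> \<le> (\<integral>\<^sup>+x. ennreal (f x) * indicator A x \<partial>lborel)"
    by (intro nn_integral_mono) (auto simp: lo ennreal_leI split: split_indicator)
  also have "\<dots> = emeasure (density lborel f) A"
    using f A by (simp add: emeasure_density)
  finally show ?thesis .
qed

lemma emeasure_density_le_const:
  fixes f :: "real \<Rightarrow> real"
  assumes f: "f \<in> borel_measurable borel" and A: "A \<in> sets borel"
    and hi: "\<And>x. x \<in> A \<Longrightarrow> f x \<le> hi"
  shows "emeasure (density lborel f) A \<le> ennreal hi * emeasure lborel A"
proof -
  have "emeasure (density lborel f) A = (\<integral>\<^sup>+x. ennreal (f x) * indicator A x \<partial>lborel)"
    using f A by (simp add: emeasure_density)
  also have "\<dots> \<le> (\<integral>\<^sup>+x. ennreal hi * indicator A x \<partial>lborel)"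
    by (intro nn_integral_mono) (auto simp: hi ennreal_leI split: split_indicator)
  also have "\<dots> = ennreal hi * emeasure lborel A"
    using A by (simp add: nn_integral_cmult_indicator)
  finally show ?thesis .
qed

lemma measure_Icc_diff_Icc:
  fixes a b e :: real
  assumes "finite_measure M" "sets M = sets borel" "0 \<le> e"
  shows "measure M {a - e..b + e} - measure M {a..b} = measure M ({a - e..b + e} - {a..b})"
proof -
  have "{a..b} \<subseteq> {a - e..b + e}"
    using assms(3) by auto
  then show ?thesis
    using finite_measure.finite_measure_Diff[OF assms(1), of "{a - e..b + e}" "{a..b}"] assms(2) by simp
qed

lemma boundary_measure_density_le:
  fixes f :: "real \<Rightarrow> real"
  assumes fin: "finite_measure (density lborel f)" and f: "f \<in> borel_measurable borel"
    and hi: "0 \<le> hi" "\<And>x. f x \<le> hi" and ab: "a \<le> b"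
  shows "boundary_measure (density lborel f) a b \<le> ereal (2 * hi)"
  unfolding boundary_measure_def
proof (rule Liminf_le)
  let ?\<mu> = "density lborel f"
  show "\<forall>\<^sub>F e in at_right 0. ereal ((measure ?\<mu> {a - e..b + e} - measure ?\<mu> {a..b}) / e) \<le> ereal (2 * hi)"
    using eventually_at_right_less[of 0]
  proof eventually_elim
    case (elim e)
    let ?A = "{a - e..b + e} - {a..b}"
    have "ennreal (measure ?\<mu> ?A) = emeasure ?\<mu> ?A"
      using fin by (simp add: finite_measure.emeasure_eq_measure)
    also have "\<dots> \<le> ennreal hi * ennreal (2 * e)"
      using emeasure_density_le_const[OF f, of ?A hi] emeasure_lborel_Icc_diff_Icc[OF ab, of e] elim hi
      by simp
    also have "\<dots> = ennreal (2 * hi * e)"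
      using hi elim by (simp add: ennreal_mult[symmetric] mult_ac)
    finally have "measure ?\<mu> ?A \<le> 2 * hi * e"
      using hi elim by simp
    then show ?case
      using measure_Icc_diff_Icc[OF fin, of e a b] elim by (simp add: pos_divide_le_eq)
  qed
qed simp

lemma boundary_measure_density_ge:
  fixes f :: "real \<Rightarrow> real"
  assumes fin: "finite_measure (density lborel f)" and f: "f \<in> borel_measurable borel"
    and d: "0 < d" and lo: "0 \<le> lo" "\<And>x. x \<in> {a - d..b + d} - {a..b} \<Longrightarrow> lo \<le> f x"
    and ab: "a \<le> b"
  shows "ereal (2 * lo) \<le> boundary_measure (density lborel f) a b"
  unfolding boundary_measure_def
proof (rule Liminf_bounded)
  let ?\<mu> = "density lborel f"
  have "\<forall>\<^sub>F e in at_right 0. e < d"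
    unfolding eventually_at_right_field using d by auto
  then show "\<forall>\<^sub>F e in at_right 0. ereal (2 * lo) \<le> ereal ((measure ?\<mu> {a - e..b + e} - measure ?\<mu> {a..b}) / e)"
    using eventually_at_right_less[of 0]
  proof eventually_elim
    case (elim e)
    let ?A = "{a - e..b + e} - {a..b}"
    have "ennreal (2 * lo * e) = ennreal lo * ennreal (2 * e)"
      using lo elim by (simp add: ennreal_mult[symmetric] mult_ac)
    also have "\<dots> \<le> emeasure ?\<mu> ?A"
      using emeasure_density_ge_const[OF f, of ?A lo] emeasure_lborel_Icc_diff_Icc[OF ab, of e] elim lo
      by auto
    also have "\<dots> = ennreal (measure ?\<mu> ?A)"
      using fin by (simp add: finite_measure.emeasure_eq_measure)
    finally have "2 * lo * e \<le> measure ?\<mu> ?A"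
      by simp
    then show ?case
      using measure_Icc_diff_Icc[OF fin, of e a b] elim by (simp add: pos_le_divide_eq)
  qed
qed

lemma has_bochner_integral_density_iff:
  fixes f h :: "real \<Rightarrow> real"
  assumes "f \<in> borel_measurable borel" "h \<in> borel_measurable borel" "\<And>x. 0 \<le> f x"
  shows "has_bochner_integral (density lborel f) h I \<longleftrightarrow> has_bochner_integral lborel (\<lambda>x. f x * h x) I"
  using assms by (simp add: has_bochner_integral_iff integrable_density integral_density)

lemma logconcave_isotropic_densityE:
  assumes lc: "logconcave_measure \<mu>" and iso: "isotropic \<mu>"
  obtains f where "f \<in> borel_measurable borel" "logconcave_fun f" "\<mu> = density lborel f"
    "prob_space \<mu>" "has_bochner_integral lborel f 1" "has_bochner_integral lborel (\<lambda>x. f x * x) 0"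
    "has_bochner_integral lborel (\<lambda>x. f x * x\<^sup>2) 1"
proof -
  obtain f where f: "f \<in> borel_measurable borel" "logconcave_fun f" and \<mu>: "\<mu> = density lborel f"
    using lc unfolding logconcave_measure_def by blast
  have ps: "prob_space \<mu>"
    using lc unfolding logconcave_measure_def by blast
  then have fin: "finite_measure \<mu>"
    by (rule prob_space.finite_measure)
  have transfer: "has_bochner_integral lborel (\<lambda>x. f x * h x) v"
    if "has_bochner_integral \<mu> h v" for h v
  proof -
    have "integrable \<mu> h"
      using that by (simp add: has_bochner_integral_iff)
    then have "h \<in> borel_measurable borel"
      using borel_measurable_integrable \<mu> by fastforce
    moreover have "0 \<le> f x" for x
      using f(2) by (simp add: logconcave_fun_def)
    ultimately show ?thesis
      using has_bochner_integral_density_iff[of f h v] f(1) that \<mu> by blast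
  qed
  have second: "integrable \<mu> (\<lambda>x. x\<^sup>2)" "(\<integral>x. x\<^sup>2 \<partial>\<mu>) = 1" and mean: "(\<integral>x. x \<partial>\<mu>) = 0"
    using iso unfolding isotropic_def by auto
  have "integrable \<mu> (\<lambda>x. x)"
    using finite_measure.square_integrable_imp_integrable[OF fin _ second(1)] \<mu> by simp
  then have "has_bochner_integral \<mu> (\<lambda>x. x) 0"
    using mean by (simp add: has_bochner_integral_iff)
  moreover have "has_bochner_integral \<mu> (\<lambda>x. 1 :: real) 1"
    using prob_space.prob_space[OF ps] finite_measure.integrable_const[OF fin]
    by (simp add: has_bochner_integral_iff)
  moreover have "has_bochner_integral \<mu> (\<lambda>x. x\<^sup>2) 1"
    using second by (simp add: has_bochner_integral_iff)
  ultimately show ?thesis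
    using that[OF f \<mu> ps] transfer[of "\<lambda>x. 1" 1] transfer[of "\<lambda>x. x" 0] transfer[of "\<lambda>x. x\<^sup>2" 1]
    by simp
qed

lemma Gamma_iso_le_2:
  assumes "logconcave_measure \<mu>" "isotropic \<mu>"
  shows "Gamma_iso \<mu> \<le> 2"
proof -
  obtain f where f: "f \<in> borel_measurable borel" "logconcave_fun f" and \<mu>: "\<mu> = density lborel f"
    and ps: "prob_space \<mu>"
    and moments: "has_bochner_integral lborel f 1" "has_bochner_integral lborel (\<lambda>x. f x * x) 0"
      "has_bochner_integral lborel (\<lambda>x. f x * x\<^sup>2) 1"
    using assms by (rule logconcave_isotropic_densityE)
  have fin: "finite_measure (density lborel f)"
    using prob_space.finite_measure[OF ps] \<mu> by simp
  have "boundary_measure \<mu> a b \<le> 2" if "a < b" for a b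
    using boundary_measure_density_le[OF fin f(1), of 1 a b] that
      logconcave_isotropic_density_le_1[OF f(2) moments] \<mu> by simp
  then show ?thesis
    unfolding Gamma_iso_def by (auto intro: SUP_least)
qed

lemma has_bochner_integral_shifted_exponential:
  "has_bochner_integral lborel (\<lambda>x. exponential_density 1 (x + 1) * (u + v * x + w * x\<^sup>2)) (u + w)"
proof -
  have "has_bochner_integral lborel (\<lambda>x. exponential_density 1 (1 * (x - - 1)) * (u + v * x + w * x\<^sup>2))
     (u + v * (- 1 + 1 / 1) + w * ((- 1)\<^sup>2 + 2 * 1 * - 1 / 1 + 2 / 1\<^sup>2))"
    by (rule has_bochner_integral_exponential_quadratic) simp_all
  then show ?thesis
    by simp
qed

lemma logconcave_measure_shifted_exponential:
  "logconcave_measure (density lborel (\<lambda>x. exponential_density 1 (x + 1)))"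
proof -
  let ?f = "\<lambda>x. exponential_density 1 (x + 1)"
  have "has_bochner_integral lborel ?f 1"
    using has_bochner_integral_shifted_exponential[of 1 0 0] by simp
  then have "(\<integral>\<^sup>+x. ennreal (?f x) \<partial>lborel) = 1"
    by (subst nn_integral_eq_integral) (auto simp: has_bochner_integral_iff exponential_density_def)
  then have "emeasure (density lborel ?f) UNIV = 1"
    by (simp add: emeasure_density)
  then have "prob_space (density lborel ?f)"
    by (intro prob_spaceI) simp
  moreover have "logconcave_fun ?f"
    using logconcave_fun_affine_comp[OF logconcave_fun_exponential_density, of 1 1 1]
    by (simp add: add.commute)
  moreover have "?f \<in> borel_measurable borel"
    by measurable
  ultimately show ?thesis
    unfolding logconcave_measure_def by blast
qed

lemma isotropic_shifted_exponential:
  "isotropic (density lborel (\<lambda>x. exponential_density 1 (x + 1)))"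
proof -
  let ?f = "\<lambda>x. exponential_density 1 (x + 1)"
  have "has_bochner_integral (density lborel ?f) (\<lambda>x. x) 0"
    using has_bochner_integral_shifted_exponential[of 0 1 0]
    by (simp add: has_bochner_integral_density_iff exponential_density_def)
  moreover have "has_bochner_integral (density lborel ?f) (\<lambda>x. x\<^sup>2) 1"
    using has_bochner_integral_shifted_exponential[of 0 0 1]
    by (simp add: has_bochner_integral_density_iff exponential_density_def)
  ultimately show ?thesis
    unfolding isotropic_def by (simp add: has_bochner_integral_iff)
qed

lemma Gamma_iso_shifted_exponential:
  "Gamma_iso (density lborel (\<lambda>x. exponential_density 1 (x + 1))) = 2"
proof (rule antisym)
  let ?\<mu> = "density lborel (\<lambda>x. exponential_density 1 (x + 1))"
  show "Gamma_iso ?\<mu> \<le> 2"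
    using Gamma_iso_le_2 logconcave_measure_shifted_exponential isotropic_shifted_exponential by blast
  have fin: "finite_measure ?\<mu>"
    using logconcave_measure_shifted_exponential
    by (simp add: logconcave_measure_def prob_space.finite_measure)
  \<comment> \<open>Near \<open>-1\<close> the density is close to 1 on both sides of a short interval.\<close>
  have lower: "ereal (2 * exp (- 3 * d)) \<le> Gamma_iso ?\<mu>" if d: "0 < d" for d
  proof -
    have density_ge: "exp (- 3 * d) \<le> exponential_density 1 (x + 1)"
      if "x \<in> {- 1 + d - d..- 1 + 2 * d + d} - {- 1 + d..- 1 + 2 * d}" for x
    proof -
      have "- 1 \<le> x" "x \<le> - 1 + 3 * d"
        using that by auto
      then show ?thesis
        by (simp add: exponential_density_def)
    qed
    have "ereal (2 * exp (- 3 * d)) \<le> boundary_measure ?\<mu> (- 1 + d) (- 1 + 2 * d)"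
      by (rule boundary_measure_density_ge[OF fin _ d _ density_ge]) (use d in simp_all)
    also have "\<dots> \<le> Gamma_iso ?\<mu>"
      unfolding Gamma_iso_def by (rule SUP_upper2[of "(- 1 + d, - 1 + 2 * d)"]) (use d in simp_all)
    finally show ?thesis .
  qed
  have "\<forall>\<^sub>F d in at_right 0. ereal (2 * exp (- 3 * d)) \<le> Gamma_iso ?\<mu>"
    using eventually_at_right_less[of "0 :: real"] by eventually_elim (rule lower)
  moreover have "((\<lambda>d. ereal (2 * exp (- 3 * d))) \<longlongrightarrow> ereal (2 * exp (- 3 * 0))) (at_right 0)"
    by (intro tendsto_intros)
  ultimately show "2 \<le> Gamma_iso ?\<mu>"
    using tendsto_upperbound[of "\<lambda>d. ereal (2 * exp (- 3 * d))" "ereal 2" "at_right 0"] by simp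
qed

theorem theorem5p9:
  shows "(\<forall>\<mu>. logconcave_measure \<mu> \<and> isotropic \<mu> \<longrightarrow> Gamma_iso \<mu> \<le> 2) \<and>
    (let \<mu>\<^sub>0 = density lborel (\<lambda>x. ennreal (if -1 \<le> x then exp (-(x + 1)) else 0))
     in logconcave_measure \<mu>\<^sub>0 \<and> isotropic \<mu>\<^sub>0 \<and> Gamma_iso \<mu>\<^sub>0 = 2)"
proof -
  have "(\<lambda>x. ennreal (if -1 \<le> x then exp (-(x + 1)) else 0)) = (\<lambda>x. ennreal (exponential_density 1 (x + 1)))"
    by (auto simp: exponential_density_def fun_eq_iff)
  then show ?thesis
    using Gamma_iso_le_2 logconcave_measure_shifted_exponential isotropic_shifted_exponential
      Gamma_iso_shifted_exponential by (simp add: Let_def)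
qed

end
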